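(* Let $S^0$ be a left ample adequate semigroup with semilattice of idempotents $E^0$, let $I$ be a left regular band having $E^0$ as a semilattice transversal, and suppose there is a left action $(x,e)\mapsto x\ast e$ of $S^0$ on $I$ (so $(xy)\ast e=x\ast(y\ast e)$) with $x\ast(ef)=(x\ast e)(x\ast f)$ for all $x\in S^0$, $e,f\in I$. Let $W=\{(e,x)\in I\times S^0: e\in L_{x^+}\}$ with multiplication $(e,x)(g,y)=(e(x\ast g),xy)$, suppose that $x\ast y^+=(xy)^+$ for all $x,y\in S^0$, and let $W^0=\{(x^+,x):x\in S^0\}$. Then for all $w\in W^0$ and $e\in E(W^0)$, $we=(we)^+w$, where for $u=(z^+,z)\in W^0$ we write $u^+=(z^+,z^+)$.
   Context: For a semigroup $T$, $E(T)$ is its idempotents; $a\,\mathcal{R}^\ast\,b$ iff for all $x,y\in T^1$, $xa=ya\Leftrightarrow xb=yb$, and $\mathcal{L}^\ast$ dually. $T$ is adequate if every $\mathcal{R}^\ast$- and $\mathcal{L}^\ast$-class contains an idempotent and idempotents commute; then $x^+$ is the unique idempotent $\mathcal{R}^\ast$-related to $x$. An adequate semigroup $T$ is left ample if $ae=(ae)^+a$ for all $a\in T$, $e\in E(T)$. A left regular band satisfies $xyx=xy$; $E^0$ is a semilattice transversal of $I$ if $E^0$ is a subsemilattice of $I$ and each element of $I$ has exactly one inverse in $E^0$. For $x\in E^0$, $L_x$ is the $\mathcal{L}$-class of $x$ in $I$. *)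

theory Defs
  imports Main
begin

definition semigroup_on :: "'a set \<Rightarrow> ('a \<Rightarrow> 'a \<Rightarrow> 'a) \<Rightarrow> bool" where
  "semigroup_on T m \<longleftrightarrow> (\<forall>x\<in>T. \<forall>y\<in>T. m x y \<in> T) \<and>
     (\<forall>x\<in>T. \<forall>y\<in>T. \<forall>z\<in>T. m (m x y) z = m x (m y z))"

definition idems :: "'a set \<Rightarrow> ('a \<Rightarrow> 'a \<Rightarrow> 'a) \<Rightarrow> 'a set" where
  "idems T m = {e\<in>T. m e e = e}"

text \<open>Multiplication by an element of \<open>T^1\<close> (None stands for the adjoined identity).\<close>

fun lmul1 :: "('a \<Rightarrow> 'a \<Rightarrow> 'a) \<Rightarrow> 'a option \<Rightarrow> 'a \<Rightarrow> 'a" where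
  "lmul1 m None a = a"
| "lmul1 m (Some x) a = m x a"

fun rmul1 :: "('a \<Rightarrow> 'a \<Rightarrow> 'a) \<Rightarrow> 'a \<Rightarrow> 'a option \<Rightarrow> 'a" where
  "rmul1 m a None = a"
| "rmul1 m a (Some x) = m a x"

definition one_ext :: "'a set \<Rightarrow> 'a option set" where
  "one_ext T = insert None (Some ` T)"

definition Rstar :: "'a set \<Rightarrow> ('a \<Rightarrow> 'a \<Rightarrow> 'a) \<Rightarrow> 'a \<Rightarrow> 'a \<Rightarrow> bool" where
  "Rstar T m a b \<longleftrightarrow> (\<forall>x\<in>one_ext T. \<forall>y\<in>one_ext T.
      (lmul1 m x a = lmul1 m y a \<longleftrightarrow> lmul1 m x b = lmul1 m y b))"

definition Lstar :: "'a set \<Rightarrow> ('a \<Rightarrow> 'a \<Rightarrow> 'a) \<Rightarrow> 'a \<Rightarrow> 'a \<Rightarrow> bool" where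
  "Lstar T m a b \<longleftrightarrow> (\<forall>x\<in>one_ext T. \<forall>y\<in>one_ext T.
      (rmul1 m a x = rmul1 m a y \<longleftrightarrow> rmul1 m b x = rmul1 m b y))"

definition adequate :: "'a set \<Rightarrow> ('a \<Rightarrow> 'a \<Rightarrow> 'a) \<Rightarrow> bool" where
  "adequate T m \<longleftrightarrow> semigroup_on T m \<and>
     (\<forall>e\<in>idems T m. \<forall>f\<in>idems T m. m e f = m f e) \<and>
     (\<forall>a\<in>T. (\<exists>e\<in>idems T m. Rstar T m a e) \<and> (\<exists>e\<in>idems T m. Lstar T m a e))"

definition splus :: "'a set \<Rightarrow> ('a \<Rightarrow> 'a \<Rightarrow> 'a) \<Rightarrow> 'a \<Rightarrow> 'a" where
  "splus T m x = (THE e. e \<in> idems T m \<and> Rstar T m x e)"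

definition left_ample :: "'a set \<Rightarrow> ('a \<Rightarrow> 'a \<Rightarrow> 'a) \<Rightarrow> bool" where
  "left_ample T m \<longleftrightarrow> adequate T m \<and>
     (\<forall>a\<in>T. \<forall>e\<in>idems T m. m a e = m (splus T m (m a e)) a)"

definition left_regular_band :: "'a set \<Rightarrow> ('a \<Rightarrow> 'a \<Rightarrow> 'a) \<Rightarrow> bool" where
  "left_regular_band T m \<longleftrightarrow> semigroup_on T m \<and> (\<forall>x\<in>T. m x x = x) \<and>
     (\<forall>x\<in>T. \<forall>y\<in>T. m (m x y) x = m x y)"

definition is_inverse :: "('a \<Rightarrow> 'a \<Rightarrow> 'a) \<Rightarrow> 'a \<Rightarrow> 'a \<Rightarrow> bool" where
  "is_inverse m a b \<longleftrightarrow> m (m a b) a = a \<and> m (m b a) b = b"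

definition semilattice_transversal :: "'a set \<Rightarrow> 'a set \<Rightarrow> ('a \<Rightarrow> 'a \<Rightarrow> 'a) \<Rightarrow> bool" where
  "semilattice_transversal E T m \<longleftrightarrow> E \<subseteq> T \<and>
     (\<forall>e\<in>E. \<forall>f\<in>E. m e f \<in> E) \<and> (\<forall>e\<in>E. m e e = e) \<and>
     (\<forall>e\<in>E. \<forall>f\<in>E. m e f = m f e) \<and>
     (\<forall>a\<in>T. \<exists>!b. b \<in> E \<and> is_inverse m a b)"

text \<open>Green's L-class of x in T: y L x iff T^1 y = T^1 x.\<close>
definition Lclass :: "'a set \<Rightarrow> ('a \<Rightarrow> 'a \<Rightarrow> 'a) \<Rightarrow> 'a \<Rightarrow> 'a set" where
  "Lclass T m x = {y\<in>T. (\<lambda>u. lmul1 m u y) ` one_ext T = (\<lambda>u. lmul1 m u x) ` one_ext T}"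

definition Wset :: "'a set \<Rightarrow> ('a \<Rightarrow> 'a \<Rightarrow> 'a) \<Rightarrow> 'a set \<Rightarrow> ('a \<Rightarrow> 'a \<Rightarrow> 'a) \<Rightarrow> ('a \<times> 'a) set" where
  "Wset S mS I mI = {(e, x). e \<in> I \<and> x \<in> S \<and> e \<in> Lclass I mI (splus S mS x)}"

definition Wmult :: "('a \<Rightarrow> 'a \<Rightarrow> 'a) \<Rightarrow> ('a \<Rightarrow> 'a \<Rightarrow> 'a) \<Rightarrow> ('a \<Rightarrow> 'a \<Rightarrow> 'a)
     \<Rightarrow> 'a \<times> 'a \<Rightarrow> 'a \<times> 'a \<Rightarrow> 'a \<times> 'a" where
  "Wmult mS mI act u v = (mI (fst u) (act (snd u) (fst v)), mS (snd u) (snd v))"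

definition W0set :: "'a set \<Rightarrow> ('a \<Rightarrow> 'a \<Rightarrow> 'a) \<Rightarrow> ('a \<times> 'a) set" where
  "W0set S mS = {(splus S mS x, x) | x. x \<in> S}"

definition Wplus :: "'a set \<Rightarrow> ('a \<Rightarrow> 'a \<Rightarrow> 'a) \<Rightarrow> 'a \<times> 'a \<Rightarrow> 'a \<times> 'a" where
  "Wplus S mS u = (splus S mS (snd u), splus S mS (snd u))"

end

theory Submission
  imports Defs
begin

text \<open>
  Under \<open>x \<ast> y\<^sup>+ = (xy)\<^sup>+\<close> the product of \<open>(x\<^sup>+, x)\<close> and \<open>(y\<^sup>+, y)\<close> in \<open>W\<close> is
  \<open>(x\<^sup>+(xy)\<^sup>+, xy) = ((xy)\<^sup>+, xy)\<close>, so \<open>W\<^sup>0\<close> is a copy of \<open>S\<^sup>0\<close> and its idempotents are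
  the pairs \<open>(f, f)\<close> with \<open>f \<in> E\<^sup>0\<close>. For \<open>w = (x\<^sup>+, x)\<close> and \<open>e = (f, f)\<close>, both
  \<open>we\<close> and \<open>(we)\<^sup>+w\<close> are therefore the images of \<open>xf\<close> and \<open>(xf)\<^sup>+x\<close>, which agree
  because \<open>S\<^sup>0\<close> is left ample.
\<close>

lemma Rstar_cancel:
  assumes "Rstar T m a b" "u \<in> one_ext T" "v \<in> one_ext T"
  shows "lmul1 m u a = lmul1 m v a \<longleftrightarrow> lmul1 m u b = lmul1 m v b"
  using assms unfolding Rstar_def by blast

lemma Rstar_idem_left_unit:
  assumes "Rstar T m a e" "e \<in> idems T m"
  shows "m e a = a"
proof -
  have "Some e \<in> one_ext T" "None \<in> one_ext T"
    using assms(2) by (auto simp: one_ext_def idems_def)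
  then show ?thesis
    using Rstar_cancel[OF assms(1), of "Some e" None] assms(2) by (simp add: idems_def)
qed

lemma Rstar_left_unit_transfer:
  assumes "Rstar T m a b" "z \<in> T" "m z a = a"
  shows "m z b = b"
proof -
  have "Some z \<in> one_ext T" "None \<in> one_ext T"
    using assms(2) by (auto simp: one_ext_def)
  then show ?thesis
    using Rstar_cancel[OF assms(1), of "Some z" None] assms(3) by simp
qed

lemma adequate_Rstar_idem_unique:
  assumes ad: "adequate T m" and e: "e \<in> idems T m" and f: "f \<in> idems T m"
    and "Rstar T m a e" "Rstar T m a f"
  shows "e = f"
proof -
  have "e \<in> T" "f \<in> T" using e f by (simp_all add: idems_def)
  moreover have "m e a = a" "m f a = a"
    using Rstar_idem_left_unit[OF assms(4) e] Rstar_idem_left_unit[OF assms(5) f] .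
  ultimately have "m e f = f" "m f e = e"
    using Rstar_left_unit_transfer assms(4,5) by metis+
  moreover have "m e f = m f e"
    using ad e f unfolding adequate_def by blast
  ultimately show ?thesis by simp
qed

lemma splus_idem_Rstar:
  assumes ad: "adequate T m" and a: "a \<in> T"
  shows "splus T m a \<in> idems T m" "Rstar T m a (splus T m a)"
proof -
  obtain e where e: "e \<in> idems T m" "Rstar T m a e"
    using ad a unfolding adequate_def by blast
  have "splus T m a \<in> idems T m \<and> Rstar T m a (splus T m a)"
    unfolding splus_def
  proof (rule theI[of _ e])
    show "e \<in> idems T m \<and> Rstar T m a e" using e by simp
    show "x = e" if "x \<in> idems T m \<and> Rstar T m a x" for x
      using adequate_Rstar_idem_unique[OF ad _ e(1) _ e(2)] that by blast
  qed
  then show "splus T m a \<in> idems T m" "Rstar T m a (splus T m a)" by blast+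
qed

lemma splus_in_carrier:
  "adequate T m \<Longrightarrow> a \<in> T \<Longrightarrow> splus T m a \<in> T"
  using splus_idem_Rstar(1) by (fastforce simp: idems_def)

lemma splus_mult_left:
  assumes "adequate T m" "a \<in> T"
  shows "m (splus T m a) a = a"
  using Rstar_idem_left_unit splus_idem_Rstar[OF assms] by metis

lemma splus_of_idem:
  assumes ad: "adequate T m" and e: "e \<in> idems T m"
  shows "splus T m e = e"
proof -
  have "e \<in> T" using e by (simp add: idems_def)
  moreover have "Rstar T m e e" unfolding Rstar_def by blast
  ultimately show ?thesis
    using adequate_Rstar_idem_unique[OF ad splus_idem_Rstar(1)[OF ad] e] splus_idem_Rstar(2)[OF ad]
    by metis
qed

lemma splus_mult_splus_prod:
  assumes ad: "adequate T m" and x: "x \<in> T" and y: "y \<in> T"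
  shows "m (splus T m x) (splus T m (m x y)) = splus T m (m x y)"
proof -
  have sg: "semigroup_on T m" using ad by (simp add: adequate_def)
  then have xy: "m x y \<in> T" using x y by (simp add: semigroup_on_def)
  have "m (splus T m x) (m x y) = m (m (splus T m x) x) y"
    using sg x y splus_in_carrier[OF ad x] by (simp add: semigroup_on_def)
  then have "m (splus T m x) (m x y) = m x y"
    using splus_mult_left[OF ad x] by simp
  then show ?thesis
    by (rule Rstar_left_unit_transfer[OF splus_idem_Rstar(2)[OF ad xy] splus_in_carrier[OF ad x]])
qed

lemma Wmult_W0set:
  assumes ad: "adequate S mS"
    and E0_mult: "\<forall>e\<in>idems S mS. \<forall>f\<in>idems S mS. mI e f = mS e f"
    and act_plus: "\<forall>x\<in>S. \<forall>y\<in>S. act x (splus S mS y) = splus S mS (mS x y)"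
    and x: "x \<in> S" and y: "y \<in> S"
  shows "Wmult mS mI act (splus S mS x, x) (splus S mS y, y)
           = (splus S mS (mS x y), mS x y)"
proof -
  have "mS x y \<in> S"
    using ad x y by (simp add: adequate_def semigroup_on_def)
  then have "mI (splus S mS x) (splus S mS (mS x y)) = splus S mS (mS x y)"
    using E0_mult splus_idem_Rstar(1)[OF ad] splus_mult_splus_prod[OF ad x y] x by simp
  then show ?thesis
    using act_plus x y by (simp add: Wmult_def)
qed

lemma idems_W0set:
  assumes ad: "adequate S mS" and e: "e \<in> idems (W0set S mS) (Wmult mS mI act)"
  obtains f where "f \<in> idems S mS" "e = (f, f)"
proof -
  obtain y where y: "y \<in> S" "e = (splus S mS y, y)" and "Wmult mS mI act e e = e"
    using e unfolding W0set_def idems_def by blast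
  then have "y \<in> idems S mS"
    by (simp add: Wmult_def idems_def)
  then show ?thesis
    using that y splus_of_idem[OF ad] by metis
qed

theorem lemma3p3:
  fixes S I :: "'a set"
    and mS mI act :: "'a \<Rightarrow> 'a \<Rightarrow> 'a"
  assumes S_ample: "left_ample S mS"
    and I_lrb: "left_regular_band I mI"
    and transv: "semilattice_transversal (idems S mS) I mI"
    and E0_mult: "\<forall>e\<in>idems S mS. \<forall>f\<in>idems S mS. mI e f = mS e f"
    and act_closed: "\<forall>x\<in>S. \<forall>e\<in>I. act x e \<in> I"
    and act_assoc: "\<forall>x\<in>S. \<forall>y\<in>S. \<forall>e\<in>I. act (mS x y) e = act x (act y e)"
    and act_hom: "\<forall>x\<in>S. \<forall>e\<in>I. \<forall>f\<in>I. act x (mI e f) = mI (act x e) (act x f)"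
    and act_plus: "\<forall>x\<in>S. \<forall>y\<in>S. act x (splus S mS y) = splus S mS (mS x y)"
  shows "\<forall>w\<in>W0set S mS. \<forall>e\<in>idems (W0set S mS) (Wmult mS mI act).
           Wmult mS mI act w e =
           Wmult mS mI act (Wplus S mS (Wmult mS mI act w e)) w"
proof (intro ballI)
  fix w e
  assume w: "w \<in> W0set S mS" and e: "e \<in> idems (W0set S mS) (Wmult mS mI act)"
  have ad: "adequate S mS" using S_ample by (simp add: left_ample_def)
  let ?p = "splus S mS" and ?W = "Wmult mS mI act"
  note W0_mult = Wmult_W0set[OF ad E0_mult act_plus]
  obtain x where x: "x \<in> S" "w = (?p x, x)" using w unfolding W0set_def by blast
  obtain f where f: "f \<in> idems S mS" "e = (f, f)" using idems_W0set[OF ad e] .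
  have fS: "f \<in> S" and "?p f = f" using f splus_of_idem[OF ad] by (auto simp: idems_def)
  then have we: "?W w e = (?p (mS x f), mS x f)" using W0_mult x f by metis
  have xf: "mS x f \<in> S" using ad x fS by (simp add: adequate_def semigroup_on_def)
  have ample: "mS x f = mS (?p (mS x f)) x"
    using S_ample x f unfolding left_ample_def by blast
  have "Wplus S mS (?W w e) = (?p (?p (mS x f)), ?p (mS x f))"
    using we splus_of_idem[OF ad splus_idem_Rstar(1)[OF ad xf]] by (simp add: Wplus_def)
  then have "?W (Wplus S mS (?W w e)) w = (?p (mS x f), mS x f)"
    using W0_mult[OF splus_in_carrier[OF ad xf] x(1)] x(2) ample by simp
  then show "?W w e = ?W (Wplus S mS (?W w e)) w" using we by simp
qed

end
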